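(* Let $\Omega_n=\dfrac{\pi^{n/2}}{\Gamma\left(\frac n2+1\right)}$ for $n\in\mathbb{N}_0$, and \[ r(n)=1+\frac1{2n}-\frac3{8n^2}+\frac3{16n^3},\qquad s(n)=r(n)+\frac3{128n^4}. \] Then $r(n)<\frac{\Omega_n^2}{\Omega_{n-1}\Omega_{n+1}}$ for every integer $n\ge6$, and $\frac{\Omega_n^2}{\Omega_{n-1}\Omega_{n+1}}<s(n)$ for every integer $n\ge1$.
   Context: $\Omega_n$ is the volume of the unit ball in $\mathbb{R}^n$ ($\Omega_0=1$); $\Gamma$ is Euler's gamma function. *)

theory Defs
  imports "HOL-Analysis.Analysis"
begin

definition r_fun :: "nat \<Rightarrow> real" where
  "r_fun n = 1 + 1 / (2 * real n) - 3 / (8 * real n ^ 2) + 3 / (16 * real n ^ 3)"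

definition s_fun :: "nat \<Rightarrow> real" where
  "s_fun n = r_fun n + 3 / (128 * real n ^ 4)"

end

theory Submission
  imports Defs "HOL-Real_Asymp.Real_Asymp"
begin

text \<open>
  The ratio equals \<open>G(x) = \<Gamma>(x/2 + 1/2) \<Gamma>(x/2 + 3/2) / \<Gamma>(x/2 + 1)\<^sup>2\<close>, which satisfies
  \<open>G(n + 2) = G(n) (n + 1)(n + 3) / (n + 2)\<^sup>2\<close> and tends to \<open>1\<close>, since log-convexity of \<open>\<Gamma>\<close>
  traps it between \<open>1\<close> and \<open>(n + 1)/n\<close>. For a bound \<open>b(n) \<longrightarrow> 1\<close>, the quotient \<open>G/b\<close> along
  \<open>n, n + 2, n + 4, \<dots>\<close> is therefore monotone as long as \<open>(n + 1)(n + 3) b(n) - (n + 2)\<^sup>2 b(n + 2)\<close>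
  keeps its sign, and it converges to \<open>1\<close>; so the sign decides whether \<open>b\<close> lies below or
  above \<open>G\<close>. For \<open>b = r\<close> this difference is \<open>-(3n - 18)/(16 n\<^sup>3 (n + 2))\<close>, for \<open>b = s\<close> it is
  positive for all \<open>n\<close>.
\<close>

lemma Gamma_plus1_pos: "x > 0 \<Longrightarrow> Gamma (x + 1) = x * Gamma (x :: real)"
  by (rule Gamma_plus1) (auto elim!: nonpos_Ints_cases)

lemma Gamma_midpoint_sq_le:
  fixes x y :: real
  assumes "x > 0" "y > 0"
  shows "Gamma ((x + y) / 2) ^ 2 \<le> Gamma x * Gamma y"
proof -
  have pos: "Gamma x > 0" "Gamma y > 0" "Gamma ((x + y) / 2) > 0"
    using assms by simp_all
  have "(ln \<circ> Gamma) ((1 - 1/2) *\<^sub>R x + (1/2) *\<^sub>R y)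
          \<le> (1 - 1/2) * (ln \<circ> Gamma) x + (1/2) * (ln \<circ> Gamma) y"
    by (rule convex_onD[OF log_convex_Gamma_real]) (use assms in auto)
  then have "ln (Gamma ((x + y) / 2) ^ 2) \<le> ln (Gamma x * Gamma y)"
    using pos by (simp add: ln_mult ln_realpow field_simps)
  then show ?thesis
    using pos by simp
qed

lemma Gamma_plus_half_sq_le:
  fixes x :: real
  assumes "x > 0"
  shows "Gamma (x + 1/2) ^ 2 \<le> x * Gamma x ^ 2"
proof -
  have "Gamma ((x + (x + 1)) / 2) ^ 2 \<le> Gamma x * Gamma (x + 1)"
    using assms by (intro Gamma_midpoint_sq_le) auto
  then show ?thesis
    using assms by (simp add: Gamma_plus1_pos power2_eq_square mult_ac add_divide_distrib)
qed

definition gamma_ratio :: "real \<Rightarrow> real" where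
  "gamma_ratio x = Gamma (x/2 + 1/2) * Gamma (x/2 + 3/2) / Gamma (x/2 + 1) ^ 2"

lemma unit_ball_vol_ratio:
  fixes x :: real
  assumes "x > -1"
  shows "unit_ball_vol x ^ 2 / (unit_ball_vol (x - 1) * unit_ball_vol (x + 1)) = gamma_ratio x"
proof -
  have shifts: "(x - 1)/2 + 1 = x/2 + 1/2" "(x + 1)/2 + 1 = x/2 + 3/2"
    by (simp_all add: field_simps)
  have pi_powers: "(pi powr (x/2)) ^ 2 = pi powr x"
    "pi powr ((x - 1)/2) * pi powr ((x + 1)/2) = pi powr x"
    by (simp add: power2_eq_square powr_add[symmetric],
        simp add: powr_add[symmetric] add_divide_distrib[symmetric])
  have "Gamma (x/2 + 1/2) > 0" "Gamma (x/2 + 3/2) > 0" "Gamma (x/2 + 1) > 0"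
    using assms by simp_all
  moreover have "unit_ball_vol x ^ 2 / (unit_ball_vol (x - 1) * unit_ball_vol (x + 1))
      = (pi powr (x/2)) ^ 2 / Gamma (x/2 + 1) ^ 2 /
        (pi powr ((x - 1)/2) * pi powr ((x + 1)/2) / (Gamma (x/2 + 1/2) * Gamma (x/2 + 3/2)))"
    unfolding unit_ball_vol_def shifts by (simp add: power_divide)
  ultimately show ?thesis
    unfolding pi_powers gamma_ratio_def by (simp add: field_simps)
qed

lemma gamma_ratio_pos: "x > -1 \<Longrightarrow> gamma_ratio x > 0"
  unfolding gamma_ratio_def by (intro divide_pos_pos mult_pos_pos zero_less_power Gamma_real_pos) simp_all

lemma gamma_ratio_add2:
  fixes x :: real
  assumes "x > -1"
  shows "gamma_ratio (x + 2) = gamma_ratio x * ((x + 1) * (x + 3) / (x + 2) ^ 2)"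
proof -
  define a where "a = x/2 + 1/2"
  define b where "b = x/2 + 1"
  have ab: "a > 0" "b > 0"
    using assms by (simp_all add: a_def b_def)
  have Gamma_a: "Gamma (a + 1) = a * Gamma a"
    using ab by (simp add: Gamma_plus1_pos)
  have Gamma_a1: "Gamma (a + 1 + 1) = (a + 1) * (a * Gamma a)"
    using ab Gamma_plus1_pos[of "a + 1"] by (simp only: Gamma_a)
  have Gamma_b: "Gamma (b + 1) = b * Gamma b"
    using ab by (simp add: Gamma_plus1_pos)
  have "gamma_ratio x = Gamma a * Gamma (a + 1) / Gamma b ^ 2"
    "gamma_ratio (x + 2) = Gamma (a + 1) * Gamma (a + 1 + 1) / Gamma (b + 1) ^ 2"
    by (simp_all add: gamma_ratio_def a_def b_def field_simps)
  then have ratio_x: "gamma_ratio x = Gamma a * (a * Gamma a) / Gamma b ^ 2"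
    and ratio_x2: "gamma_ratio (x + 2) = (a * Gamma a) * ((a + 1) * (a * Gamma a)) / (b * Gamma b) ^ 2"
    unfolding Gamma_a Gamma_a1 Gamma_b .
  have "(x + 1) * (x + 3) / (x + 2) ^ 2 = a * (a + 1) / b ^ 2"
    using assms by (simp add: a_def b_def power_divide field_simps)
  then show ?thesis
    unfolding ratio_x ratio_x2 by (simp add: power_mult_distrib mult_ac)
qed

lemma gamma_ratio_ge_1:
  fixes x :: real
  assumes "x > -1"
  shows "1 \<le> gamma_ratio x"
proof -
  have "Gamma (((x/2 + 1/2) + (x/2 + 3/2)) / 2) ^ 2 \<le> Gamma (x/2 + 1/2) * Gamma (x/2 + 3/2)"
    using assms by (intro Gamma_midpoint_sq_le) auto
  moreover have "Gamma (x/2 + 1) > 0"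
    using assms by simp
  ultimately show ?thesis
    unfolding gamma_ratio_def by (simp add: add_divide_distrib)
qed

lemma gamma_ratio_le:
  fixes x :: real
  assumes "x > 0"
  shows "gamma_ratio x \<le> (x + 1) / x"
proof -
  define c where "c = x/2"
  have c: "c > 0" "Gamma c \<noteq> 0"
    using assms Gamma_real_pos[of c] by (simp_all add: c_def less_imp_neq[symmetric])
  have "gamma_ratio x = Gamma (c + 1/2) * Gamma (c + 1/2 + 1) / Gamma (c + 1) ^ 2"
    by (simp add: gamma_ratio_def c_def add_ac)
  moreover have "Gamma (c + 1/2 + 1) = (c + 1/2) * Gamma (c + 1/2)"
    by (rule Gamma_plus1_pos) (use c in simp)
  moreover have "Gamma (c + 1) = c * Gamma c"
    using c(1) by (rule Gamma_plus1_pos)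
  ultimately have ratio: "gamma_ratio x = (c + 1/2) * Gamma (c + 1/2) ^ 2 / (c * Gamma c) ^ 2"
    by (simp add: power2_eq_square mult_ac)
  have "\<dots> \<le> (c + 1/2) * (c * Gamma c ^ 2) / (c * Gamma c) ^ 2"
    using c Gamma_plus_half_sq_le[of c] by (intro divide_right_mono mult_left_mono) auto
  also have "\<dots> = (c + 1/2) / c"
    using c by (simp add: power2_eq_square field_simps)
  also have "\<dots> = (x + 1) / x"
    using assms by (simp add: c_def field_simps)
  finally show ?thesis
    unfolding ratio .
qed

lemma gamma_ratio_LIMSEQ: "(\<lambda>n. gamma_ratio (real n)) \<longlonglongrightarrow> 1"
proof (rule tendsto_sandwich[where f = "\<lambda>_. 1" and h = "\<lambda>n. (real n + 1) / real n"])
  show "\<forall>\<^sub>F n in sequentially. 1 \<le> gamma_ratio (real n)"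
    by (simp add: gamma_ratio_ge_1)
  show "\<forall>\<^sub>F n in sequentially. gamma_ratio (real n) \<le> (real n + 1) / real n"
    using eventually_gt_at_top[of "0::nat"] by eventually_elim (simp add: gamma_ratio_le)
  show "(\<lambda>n. (real n + 1) / real n) \<longlonglongrightarrow> 1"
    by real_asymp
qed simp

lemma gamma_ratio_of_nat_add2:
  "gamma_ratio (real (n + 2)) = gamma_ratio (real n) * ((real n + 1) * (real n + 3) / (real n + 2) ^ 2)"
  using gamma_ratio_add2[of "real n"] by (simp add: add.commute)

lemma gamma_ratio_div_add2_le_iff:
  fixes g :: "nat \<Rightarrow> real"
  assumes "g n > 0" "g (n + 2) > 0"
  shows "gamma_ratio (real (n + 2)) / g (n + 2) \<le> gamma_ratio (real n) / g n
           \<longleftrightarrow> (real n + 1) * (real n + 3) * g n \<le> (real n + 2) ^ 2 * g (n + 2)"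
  unfolding gamma_ratio_of_nat_add2
  using assms gamma_ratio_pos[of "real n"] by (simp add: divide_simps mult_ac)

lemma gamma_ratio_div_add2_less_iff:
  fixes g :: "nat \<Rightarrow> real"
  assumes "g n > 0" "g (n + 2) > 0"
  shows "gamma_ratio (real (n + 2)) / g (n + 2) < gamma_ratio (real n) / g n
           \<longleftrightarrow> (real n + 1) * (real n + 3) * g n < (real n + 2) ^ 2 * g (n + 2)"
  unfolding gamma_ratio_of_nat_add2
  using assms gamma_ratio_pos[of "real n"] by (simp add: divide_simps mult_ac)

lemma LIMSEQ_le_if_decreasing_by_2:
  fixes h :: "nat \<Rightarrow> 'a :: linorder_topology"
  assumes "h \<longlonglongrightarrow> L" "\<And>m. m \<ge> n \<Longrightarrow> h (m + 2) \<le> h m"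
  shows "L \<le> h n"
proof -
  have "decseq (\<lambda>k. h (n + 2 * k))"
    using assms(2) by (simp add: decseq_Suc_iff add.assoc)
  moreover have "strict_mono (\<lambda>k::nat. n + 2 * k)"
    by (simp add: strict_mono_def)
  then have "(\<lambda>k. h (n + 2 * k)) \<longlonglongrightarrow> L"
    using LIMSEQ_subseq_LIMSEQ[OF assms(1)] by (simp add: o_def)
  ultimately show ?thesis
    using decseq_ge[of "\<lambda>k. h (n + 2 * k)" L 0] by simp
qed

lemma LIMSEQ_ge_if_increasing_by_2:
  fixes h :: "nat \<Rightarrow> 'a :: linorder_topology"
  assumes "h \<longlonglongrightarrow> L" "\<And>m. m \<ge> n \<Longrightarrow> h m \<le> h (m + 2)"
  shows "h n \<le> L"
proof -
  have "incseq (\<lambda>k. h (n + 2 * k))"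
    using assms(2) by (simp add: incseq_Suc_iff add.assoc)
  moreover have "strict_mono (\<lambda>k::nat. n + 2 * k)"
    by (simp add: strict_mono_def)
  then have "(\<lambda>k. h (n + 2 * k)) \<longlonglongrightarrow> L"
    using LIMSEQ_subseq_LIMSEQ[OF assms(1)] by (simp add: o_def)
  ultimately show ?thesis
    using incseq_le[of "\<lambda>k. h (n + 2 * k)" L 0] by simp
qed

lemma r_fun_gt_1:
  assumes "n \<ge> 1"
  shows "1 < r_fun n"
proof -
  have "r_fun n - 1 = (8 * real n ^ 2 - 6 * real n + 3) / (16 * real n ^ 3)"
    using assms by (simp add: r_fun_def field_simps power2_eq_square power3_eq_cube)
  moreover have "8 * real n ^ 2 - 6 * real n + 3 = 8 * (real n - 3/8) ^ 2 + 15/8"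
    by (simp add: power2_eq_square algebra_simps)
  ultimately have "r_fun n - 1 > 0"
    using assms by (simp add: add_nonneg_pos)
  then show ?thesis
    by simp
qed

lemma s_fun_gt_1:
  assumes "n \<ge> 1"
  shows "1 < s_fun n"
proof -
  have "3 / (128 * real n ^ 4) > 0"
    using assms by simp
  then show ?thesis
    using r_fun_gt_1[OF assms] unfolding s_fun_def by linarith
qed

lemma r_fun_LIMSEQ: "r_fun \<longlonglongrightarrow> 1"
  unfolding r_fun_def by real_asymp

lemma s_fun_LIMSEQ: "s_fun \<longlonglongrightarrow> 1"
  unfolding s_fun_def r_fun_def by real_asymp

lemma r_fun_add2_diff:
  assumes "n \<ge> 1"
  shows "(real n + 2) ^ 2 * r_fun (n + 2) - (real n + 1) * (real n + 3) * r_fun n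
           = (3 * real n - 18) / (16 * real n ^ 3 * (real n + 2))"
proof -
  have "real n > 0" "real n + 2 > 0"
    using assms by simp_all
  then show ?thesis
    unfolding r_fun_def by (simp add: divide_simps) algebra
qed

lemma s_fun_add2_diff:
  assumes "n \<ge> 1"
  shows "(real n + 1) * (real n + 3) * s_fun n - (real n + 2) ^ 2 * s_fun (n + 2)
           = (165 * real n ^ 2 + 372 * real n + 36) / (128 * real n ^ 4 * (real n + 2) ^ 2)"
proof -
  have "real n > 0" "real n + 2 > 0"
    using assms by simp_all
  then show ?thesis
    unfolding s_fun_def r_fun_def by (simp add: divide_simps) algebra
qed

lemma r_fun_add2_ge:
  assumes "n \<ge> 6"
  shows "(real n + 1) * (real n + 3) * r_fun n \<le> (real n + 2) ^ 2 * r_fun (n + 2)"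
proof -
  have "0 \<le> (3 * real n - 18) / (16 * real n ^ 3 * (real n + 2))"
    using assms by simp
  moreover have "(real n + 2) ^ 2 * r_fun (n + 2) - (real n + 1) * (real n + 3) * r_fun n
                   = (3 * real n - 18) / (16 * real n ^ 3 * (real n + 2))"
    using assms by (intro r_fun_add2_diff) simp
  ultimately show ?thesis
    by linarith
qed

lemma r_fun_add2_gt:
  assumes "n \<ge> 7"
  shows "(real n + 1) * (real n + 3) * r_fun n < (real n + 2) ^ 2 * r_fun (n + 2)"
proof -
  have "0 < (3 * real n - 18) / (16 * real n ^ 3 * (real n + 2))"
    using assms by simp
  moreover have "(real n + 2) ^ 2 * r_fun (n + 2) - (real n + 1) * (real n + 3) * r_fun n
                   = (3 * real n - 18) / (16 * real n ^ 3 * (real n + 2))"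
    using assms by (intro r_fun_add2_diff) simp
  ultimately show ?thesis
    by linarith
qed

lemma s_fun_add2_lt:
  assumes "n \<ge> 1"
  shows "(real n + 2) ^ 2 * s_fun (n + 2) < (real n + 1) * (real n + 3) * s_fun n"
proof -
  have "0 < (165 * real n ^ 2 + 372 * real n + 36) / (128 * real n ^ 4 * (real n + 2) ^ 2)"
    using assms by (simp add: add_pos_nonneg)
  moreover have "(real n + 1) * (real n + 3) * s_fun n - (real n + 2) ^ 2 * s_fun (n + 2)
                   = (165 * real n ^ 2 + 372 * real n + 36) / (128 * real n ^ 4 * (real n + 2) ^ 2)"
    using assms by (rule s_fun_add2_diff)
  ultimately show ?thesis
    by linarith
qed

lemma r_fun_less_gamma_ratio:
  assumes "n \<ge> 6"
  shows "r_fun n < gamma_ratio (real n)"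
proof -
  define h where "h m = gamma_ratio (real m) / r_fun m" for m
  have r_pos: "m \<ge> 1 \<Longrightarrow> r_fun m > 0" for m
    using r_fun_gt_1[of m] by simp
  have step: "h (m + 2) \<le> h m" if "m \<ge> 6" for m
    unfolding h_def using that r_pos[of m] r_pos[of "m + 2"] r_fun_add2_ge[OF that]
    by (subst gamma_ratio_div_add2_le_iff) simp_all
  have strict_step: "h (m + 2) < h m" if "m \<ge> 7" for m
    unfolding h_def using that r_pos[of m] r_pos[of "m + 2"] r_fun_add2_gt[OF that]
    by (subst gamma_ratio_div_add2_less_iff) simp_all
  have "h \<longlonglongrightarrow> 1 / 1"
    unfolding h_def by (intro tendsto_divide gamma_ratio_LIMSEQ r_fun_LIMSEQ) simp
  then have h_ge_1: "1 \<le> h m" if "m \<ge> 6" for m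
    using LIMSEQ_le_if_decreasing_by_2[of h 1 m] step that by simp
  have above_1: "1 < h m" if "m \<ge> 7" for m
    using h_ge_1[of "m + 2"] strict_step[OF that] that by simp
  have "1 < h n"
  proof (cases "n = 6")
    case True
    \<comment> \<open>\<open>3n - 18 = 0\<close> here, so the step from 6 to 8 is not strict\<close>
    then show ?thesis
      using above_1[of 8] step[of 6] by simp
  next
    case False
    then show ?thesis
      using above_1 assms by simp
  qed
  then show ?thesis
    using r_pos[of n] assms by (simp add: h_def divide_simps)
qed

lemma gamma_ratio_less_s_fun:
  assumes "n \<ge> 1"
  shows "gamma_ratio (real n) < s_fun n"
proof -
  define h where "h m = gamma_ratio (real m) / s_fun m" for m
  have s_pos: "m \<ge> 1 \<Longrightarrow> s_fun m > 0" for m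
    using s_fun_gt_1[of m] by simp
  have step: "h m < h (m + 2)" if "m \<ge> 1" for m
    unfolding h_def using that s_pos[of m] s_pos[of "m + 2"] s_fun_add2_lt[OF that]
    by (subst not_le[symmetric], subst gamma_ratio_div_add2_le_iff) simp_all
  have "h \<longlonglongrightarrow> 1 / 1"
    unfolding h_def by (intro tendsto_divide gamma_ratio_LIMSEQ s_fun_LIMSEQ) simp
  then have "h (n + 2) \<le> 1"
    using LIMSEQ_ge_if_increasing_by_2[of h 1 "n + 2"] step assms by (simp add: less_imp_le)
  then have "h n < 1"
    using step[OF assms] by simp
  then show ?thesis
    using s_pos[OF assms] by (simp add: h_def divide_simps)
qed

theorem theorem16:
  shows "(\<forall>n::nat. n \<ge> 6 \<longrightarrow>
            r_fun n < unit_ball_vol (real n) ^ 2 /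
              (unit_ball_vol (real n - 1) * unit_ball_vol (real n + 1)))
       \<and> (\<forall>n::nat. n \<ge> 1 \<longrightarrow>
            unit_ball_vol (real n) ^ 2 /
              (unit_ball_vol (real n - 1) * unit_ball_vol (real n + 1)) < s_fun n)"
  using r_fun_less_gamma_ratio gamma_ratio_less_s_fun unit_ball_vol_ratio by simp

end
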